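(* Let $\alpha\ge0$, $\mu\ge0$. For every uniformly continuous function $g$ on $[0,\infty)$, every $n\in\mathbb{N}$ and every $x\in[0,\infty)$, $$|T_n(g;x)-g(x)|\le\left(1+\sqrt{\frac1n x\left(4x^3\alpha^2+4x\alpha+n\right)+2\mu x\frac{e_\mu(-nx)}{e_\mu(nx)}}\right)\omega\!\left(g;\frac{1}{\sqrt n}\right).$$
   Context: The modulus of continuity is $\omega(g;\delta)=\sup\{|g(s)-g(t)|: s,t\in[0,\infty),\ |s-t|\le\delta\}$. For $\mu>-\tfrac12$ define $\gamma_\mu(2k)=\dfrac{2^{2k}k!\,\Gamma(k+\mu+1/2)}{\Gamma(\mu+1/2)}$ and $\gamma_\mu(2k+1)=\dfrac{2^{2k+1}k!\,\Gamma(k+\mu+3/2)}{\Gamma(\mu+1/2)}$, $k\ge0$; $e_\mu(x)=\sum_{k\ge0} x^k/\gamma_\mu(k)$; $\theta_k=0$ if $k$ is even and $\theta_k=1$ if $k$ is odd. Let $h_k^\mu(\xi,\alpha)=\gamma_\mu(k)\sum_{j=0}^{\lfloor k/2\rfloor}\dfrac{\alpha^j\xi^{k-2j}}{j!\,\gamma_\mu(k-2j)}$. For $\alpha\ge0,\mu\ge0$, $n\in\mathbb{N}$ and $x\in[0,\infty)$ define $$T_n(f;x)=\frac{1}{e^{\alpha x^2}e_\mu(nx)}\sum_{k=0}^\infty \frac{h_k^\mu(n,\alpha)}{\gamma_\mu(k)}x^k f\!\left(\frac{k+2\mu\theta_k}{n}\right).$$ *)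

theory Defs
  imports "HOL-Analysis.Analysis"
begin

definition modcont :: "(real \<Rightarrow> real) \<Rightarrow> real \<Rightarrow> real" where
  "modcont g \<delta> = Sup {\<bar>g s - g t\<bar> | s t. s \<ge> 0 \<and> t \<ge> 0 \<and> \<bar>s - t\<bar> \<le> \<delta>}"

definition gam :: "real \<Rightarrow> nat \<Rightarrow> real" where
  "gam \<mu> k = (if even k
     then 2 ^ k * fact (k div 2) * Gamma (real (k div 2) + \<mu> + 1/2) / Gamma (\<mu> + 1/2)
     else 2 ^ k * fact (k div 2) * Gamma (real (k div 2) + \<mu> + 3/2) / Gamma (\<mu> + 1/2))"

definition emu :: "real \<Rightarrow> real \<Rightarrow> real" where
  "emu \<mu> x = (\<Sum>k. x ^ k / gam \<mu> k)"

definition theta :: "nat \<Rightarrow> real" where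
  "theta k = (if even k then 0 else 1)"

definition hpol :: "real \<Rightarrow> nat \<Rightarrow> real \<Rightarrow> real \<Rightarrow> real" where
  "hpol \<mu> k \<xi> \<alpha> = gam \<mu> k *
     (\<Sum>j=0..k div 2. \<alpha> ^ j * \<xi> ^ (k - 2*j) / (fact j * gam \<mu> (k - 2*j)))"

definition Top :: "real \<Rightarrow> real \<Rightarrow> nat \<Rightarrow> (real \<Rightarrow> real) \<Rightarrow> real \<Rightarrow> real" where
  "Top \<alpha> \<mu> n f x = 1 / (exp (\<alpha> * x^2) * emu \<mu> (real n * x)) *
     (\<Sum>k. hpol \<mu> k (real n) \<alpha> / gam \<mu> k * x ^ k * f ((real k + 2 * \<mu> * theta k) / real n))"

end

theory Submission
  imports Defs
begin

text \<open>
  \<open>T\<^sub>n(f;x)\<close> is a weighted mean \<open>\<Sum>\<^sub>k w\<^sub>k f(\<nu>\<^sub>k) / \<Sum>\<^sub>k w\<^sub>k\<close> with nonnegative weights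
  and nodes \<open>\<nu>\<^sub>k = (k + 2\<mu>\<theta>\<^sub>k)/n\<close>; the weights are the Cauchy product of the even-indexed
  exponential series of \<open>\<alpha>x\<^sup>2\<close> with the Dunkl exponential series of \<open>nx\<close>.  For any such mean
  \<open>|g(\<nu>) - g(x)| \<le> (1 + |\<nu> - x|/\<delta>) \<omega>(g;\<delta>)\<close>, and the first absolute moment is bounded by the
  square root of the second central moment, so it suffices to compute that moment.  The recurrence
  \<open>\<gamma>\<^sub>\<mu>(k+1) = (k + 1 + 2\<mu>\<theta>\<^sub>k\<^sub>+\<^sub>1) \<gamma>\<^sub>\<mu>(k)\<close> turns the moments of the Dunkl series into index
  shifts of the series itself; the exponential moments are its special case \<open>\<mu> = 0\<close>.
\<close>

subsection \<open>Modulus of continuity\<close>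

lemma increment_bound_mult:
  fixes g :: "real \<Rightarrow> real"
  assumes step: "\<And>u v. u \<ge> 0 \<Longrightarrow> v \<ge> 0 \<Longrightarrow> \<bar>u - v\<bar> \<le> h \<Longrightarrow> \<bar>g u - g v\<bar> \<le> C"
    and "h \<ge> 0"
  shows "s \<ge> 0 \<Longrightarrow> t \<ge> 0 \<Longrightarrow> \<bar>s - t\<bar> \<le> real N * h \<Longrightarrow> \<bar>g s - g t\<bar> \<le> real N * C"
proof (induction N arbitrary: s t)
  case 0
  then show ?case by simp
next
  case (Suc N)
  define u where "u = (s + real N * t) / (real N + 1)"
  have u: "u \<ge> 0" "s - u = real N * ((s - t) / (real N + 1))" "u - t = (s - t) / (real N + 1)"
    using Suc.prems by (auto simp: u_def field_simps)
  have short: "\<bar>s - t\<bar> / (real N + 1) \<le> h"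
    using Suc.prems(3) by (simp add: divide_le_eq algebra_simps)
  have "\<bar>s - u\<bar> \<le> real N * h"
    using mult_left_mono[OF short, of "real N"] by (simp add: u(2) abs_mult)
  then have "\<bar>g s - g u\<bar> \<le> real N * C"
    using Suc.IH[OF Suc.prems(1) u(1)] by simp
  moreover have "\<bar>g u - g t\<bar> \<le> C"
    using step[OF u(1) Suc.prems(2)] short by (simp add: u(3))
  ultimately show ?case by (simp add: algebra_simps)
qed

lemma bdd_above_increments:
  fixes g :: "real \<Rightarrow> real"
  assumes "uniformly_continuous_on {0..} g"
  shows "bdd_above {\<bar>g s - g t\<bar> | s t. s \<ge> 0 \<and> t \<ge> 0 \<and> \<bar>s - t\<bar> \<le> \<delta>}"
proof -
  obtain d where "d > 0" and d: "\<And>u v. u \<ge> 0 \<Longrightarrow> v \<ge> 0 \<Longrightarrow> dist u v < d \<Longrightarrow> dist (g u) (g v) < 1"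
    using assms unfolding uniformly_continuous_on_def by (metis atLeast_iff zero_less_one)
  define h where "h = d / 2"
  have "h > 0" using \<open>d > 0\<close> by (simp add: h_def)
  have step: "\<bar>g u - g v\<bar> \<le> 1" if "u \<ge> 0" "v \<ge> 0" "\<bar>u - v\<bar> \<le> h" for u v
    using d[OF that(1,2)] that(3) \<open>d > 0\<close> by (simp add: h_def dist_real_def)
  define N where "N = nat \<lceil>\<delta> / h\<rceil>"
  have "\<delta> \<le> real N * h"
    using real_nat_ceiling_ge[of "\<delta> / h"] \<open>h > 0\<close> by (simp add: N_def divide_le_eq)
  show ?thesis
  proof (rule bdd_aboveI[where M = "real N"])
    fix z assume "z \<in> {\<bar>g s - g t\<bar> | s t. s \<ge> 0 \<and> t \<ge> 0 \<and> \<bar>s - t\<bar> \<le> \<delta>}"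
    then obtain s t where "z = \<bar>g s - g t\<bar>" "s \<ge> 0" "t \<ge> 0" "\<bar>s - t\<bar> \<le> real N * h"
      using \<open>\<delta> \<le> real N * h\<close> by force
    then show "z \<le> real N"
      using increment_bound_mult[where g = g and h = h and C = 1, OF step] \<open>h > 0\<close> by simp
  qed
qed

lemma abs_diff_le_modcont:
  fixes g :: "real \<Rightarrow> real"
  assumes "uniformly_continuous_on {0..} g" "s \<ge> 0" "t \<ge> 0" "\<bar>s - t\<bar> \<le> \<delta>"
  shows "\<bar>g s - g t\<bar> \<le> modcont g \<delta>"
  unfolding modcont_def using assms bdd_above_increments[OF assms(1)] by (intro cSup_upper) auto

lemma abs_diff_le_modcont_scaled:
  fixes g :: "real \<Rightarrow> real"
  assumes uc: "uniformly_continuous_on {0..} g" and "\<delta> > 0" "s \<ge> 0" "t \<ge> 0"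
  shows "\<bar>g s - g t\<bar> \<le> (1 + \<bar>s - t\<bar> / \<delta>) * modcont g \<delta>"
proof -
  define N where "N = nat \<lceil>\<bar>s - t\<bar> / \<delta>\<rceil>"
  have "real N = of_int \<lceil>\<bar>s - t\<bar> / \<delta>\<rceil>"
    using \<open>\<delta> > 0\<close> by (simp add: N_def)
  then have "real N \<le> 1 + \<bar>s - t\<bar> / \<delta>"
    using of_int_ceiling_le_add_one[of "\<bar>s - t\<bar> / \<delta>"] by linarith
  moreover have "\<bar>s - t\<bar> \<le> real N * \<delta>"
    using real_nat_ceiling_ge[of "\<bar>s - t\<bar> / \<delta>"] \<open>\<delta> > 0\<close> by (simp only: N_def pos_divide_le_eq)
  then have "\<bar>g s - g t\<bar> \<le> real N * modcont g \<delta>"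
    using increment_bound_mult[where g = g and h = \<delta> and C = "modcont g \<delta>"]
      abs_diff_le_modcont[OF uc] assms by simp
  moreover have "modcont g \<delta> \<ge> 0"
    using abs_diff_le_modcont[OF uc, of 0 0 \<delta>] \<open>\<delta> > 0\<close> by simp
  ultimately show ?thesis by (meson mult_right_mono order_trans)
qed

subsection \<open>Weighted means\<close>

lemma sums_Cauchy_product_nonneg:
  fixes a b :: "nat \<Rightarrow> real"
  assumes "\<And>k. a k \<ge> 0" "\<And>k. b k \<ge> 0" "a sums A" "b sums B"
  shows "(\<lambda>k. \<Sum>i\<le>k. a i * b (k - i)) sums (A * B)"
  using Cauchy_product_sums[of a b] assms by (simp add: sums_iff)

lemma weighted_abs_le_sqrt_second_moment:
  fixes a d :: "nat \<Rightarrow> real"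
  assumes a: "\<And>k. a k \<ge> 0" and a_sums: "a sums E" and "E > 0"
    and second: "(\<lambda>k. a k * (d k)\<^sup>2) sums V"
  shows "summable (\<lambda>k. a k * \<bar>d k\<bar>)" and "(\<Sum>k. a k * \<bar>d k\<bar>) \<le> E * sqrt (V / E)"
proof -
  have am_gm: "a k * \<bar>d k\<bar> \<le> a k * (d k)\<^sup>2 / (2 * c) + c / 2 * a k" if "c > 0" for c k
  proof -
    have "2 * c * \<bar>d k\<bar> \<le> (d k)\<^sup>2 + c\<^sup>2"
      using zero_le_power2[of "\<bar>d k\<bar> - c"] by (simp add: power2_eq_square algebra_simps)
    then have "\<bar>d k\<bar> \<le> (d k)\<^sup>2 / (2 * c) + c / 2"
      using that by (simp add: field_simps power2_eq_square)
    from mult_left_mono[OF this a] show ?thesis by (simp add: algebra_simps)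
  qed
  have bound_sums: "(\<lambda>k. a k * (d k)\<^sup>2 / (2 * c) + c / 2 * a k) sums (V / (2 * c) + c / 2 * E)" for c
    by (intro sums_add sums_divide sums_mult second a_sums)
  show summable: "summable (\<lambda>k. a k * \<bar>d k\<bar>)"
    using am_gm[of 1] a by (intro summable_comparison_test'[OF sums_summable[OF bound_sums[of 1]]]) auto
  define A where "A = (\<Sum>k. a k * \<bar>d k\<bar>)"
  have A_le: "A \<le> V / (2 * c) + c / 2 * E" if "c > 0" for c
    unfolding A_def using sums_le[OF am_gm[OF that] summable_sums[OF summable] bound_sums] .
  have "V \<ge> 0"
    using sums_le[of "\<lambda>_. 0", OF _ sums_zero second] a by simp
  show "A \<le> E * sqrt (V / E)"
  proof (cases "V > 0")
    case True
    define c where "c = sqrt (V / E)"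
    have "c > 0" "V = E * c\<^sup>2" using True \<open>E > 0\<close> by (simp_all add: c_def)
    then have "V / (2 * c) + c / 2 * E = E * c" by (simp add: power2_eq_square field_simps)
    then show ?thesis using A_le[OF \<open>c > 0\<close>] by (simp add: c_def)
  next
    case False
    with \<open>V \<ge> 0\<close> have "V = 0" by simp
    have "A \<le> 0"
    proof (rule ccontr)
      assume "\<not> A \<le> 0"
      then show False using A_le[of "A / E"] \<open>V = 0\<close> \<open>E > 0\<close> by (simp add: field_simps)
    qed
    with \<open>V = 0\<close> show ?thesis by simp
  qed
qed

lemma weighted_mean_deviation_le_modcont:
  fixes a p :: "nat \<Rightarrow> real" and g :: "real \<Rightarrow> real"
  assumes uc: "uniformly_continuous_on {0..} g" and "\<delta> > 0" "x \<ge> 0" "\<And>k. p k \<ge> 0"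
    and a: "\<And>k. a k \<ge> 0" and a_sums: "a sums E" and "E > 0"
    and second: "(\<lambda>k. a k * (p k - x)\<^sup>2) sums V"
  shows "\<bar>(\<Sum>k. a k * g (p k)) / E - g x\<bar> \<le> (1 + sqrt (V / E) / \<delta>) * modcont g \<delta>"
proof -
  define \<omega> where "\<omega> = modcont g \<delta>"
  define A where "A = (\<Sum>k. a k * \<bar>p k - x\<bar>)"
  have "\<omega> \<ge> 0"
    using abs_diff_le_modcont[OF uc, of 0 0 \<delta>] \<open>\<delta> > 0\<close> by (simp add: \<omega>_def)
  have A_sums: "(\<lambda>k. a k * \<bar>p k - x\<bar>) sums A"
    unfolding A_def using weighted_abs_le_sqrt_second_moment(1)[OF a a_sums \<open>E > 0\<close> second]
    by (rule summable_sums)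
  have A_le: "A \<le> E * sqrt (V / E)"
    unfolding A_def by (rule weighted_abs_le_sqrt_second_moment(2)[OF a a_sums \<open>E > 0\<close> second])
  have term_le: "\<bar>a k * (g (p k) - g x)\<bar> \<le> \<omega> * a k + \<omega> / \<delta> * (a k * \<bar>p k - x\<bar>)" for k
  proof -
    have "\<bar>a k * (g (p k) - g x)\<bar> = a k * \<bar>g (p k) - g x\<bar>"
      using a[of k] by (simp add: abs_mult)
    also have "\<dots> \<le> a k * ((1 + \<bar>p k - x\<bar> / \<delta>) * \<omega>)"
      unfolding \<omega>_def using abs_diff_le_modcont_scaled[OF uc \<open>\<delta> > 0\<close> assms(4) \<open>x \<ge> 0\<close>] a
      by (rule mult_left_mono)
    finally show ?thesis by (simp add: algebra_simps)
  qed
  have bound_sums: "(\<lambda>k. \<omega> * a k + \<omega> / \<delta> * (a k * \<bar>p k - x\<bar>)) sums (\<omega> * E + \<omega> / \<delta> * A)"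
    by (intro sums_add sums_mult a_sums A_sums)
  have abs_summable: "summable (\<lambda>k. \<bar>a k * (g (p k) - g x)\<bar>)"
    using term_le by (intro summable_comparison_test'[OF sums_summable[OF bound_sums]]) auto
  have "\<bar>\<Sum>k. a k * (g (p k) - g x)\<bar> \<le> (\<Sum>k. \<bar>a k * (g (p k) - g x)\<bar>)"
    by (rule summable_rabs[OF abs_summable])
  also have "\<dots> \<le> \<omega> * E + \<omega> / \<delta> * A"
    using sums_le[OF term_le summable_sums[OF abs_summable] bound_sums] .
  also have "\<dots> \<le> E * ((1 + sqrt (V / E) / \<delta>) * \<omega>)"
    using mult_left_mono[OF A_le, of "\<omega> / \<delta>"] \<open>\<omega> \<ge> 0\<close> \<open>\<delta> > 0\<close> by (simp add: algebra_simps)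
  finally have deviation: "\<bar>\<Sum>k. a k * (g (p k) - g x)\<bar> \<le> E * ((1 + sqrt (V / E) / \<delta>) * \<omega>)" .
  have "(\<lambda>k. a k * (g (p k) - g x) + g x * a k) sums ((\<Sum>k. a k * (g (p k) - g x)) + g x * E)"
    using summable_rabs_cancel[OF abs_summable] by (intro sums_add sums_mult a_sums summable_sums)
  then have "(\<Sum>k. a k * g (p k)) / E - g x = (\<Sum>k. a k * (g (p k) - g x)) / E"
    using \<open>E > 0\<close> by (simp add: sums_iff algebra_simps field_simps)
  then show ?thesis
    using deviation \<open>E > 0\<close> by (simp add: \<omega>_def pos_divide_le_eq mult.commute)
qed

subsection \<open>The coefficients \<open>\<gamma>\<^sub>\<mu>\<close> and the Dunkl exponential\<close>

definition gam_step :: "real \<Rightarrow> nat \<Rightarrow> real" where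
  "gam_step \<mu> k = real k + 2 * \<mu> * theta k"

lemma gam_step_ge: "\<mu> \<ge> 0 \<Longrightarrow> gam_step \<mu> k \<ge> real k"
  by (simp add: gam_step_def theta_def)

lemma gam_step_Suc: "gam_step \<mu> (Suc k) = gam_step \<mu> k + 1 + (if even k then 2 * \<mu> else - 2 * \<mu>)"
  by (simp add: gam_step_def theta_def)

lemma gam_step_0: "gam_step \<mu> 0 = 0"
  by (simp add: gam_step_def theta_def)

lemma gam_0:
  assumes "\<mu> \<ge> 0"
  shows "gam \<mu> 0 = 1"
proof -
  have "Gamma (\<mu> + 1/2) > 0" using assms by simp
  then show ?thesis by (simp add: gam_def)
qed

lemma gam_Suc:
  assumes "\<mu> \<ge> 0"
  shows "gam \<mu> (Suc k) = gam_step \<mu> (Suc k) * gam \<mu> k"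
proof -
  have "Gamma (\<mu> + 1/2) > 0" using assms by simp
  show ?thesis
  proof (cases "even k")
    case True
    then obtain i where k: "k = 2 * i" by blast
    have "Gamma (real i + \<mu> + 1/2 + 1) = (real i + \<mu> + 1/2) * Gamma (real i + \<mu> + 1/2)"
      using assms by (intro Gamma_plus1) (auto dest: nonpos_Ints_nonpos)
    then show ?thesis using \<open>Gamma (\<mu> + 1/2) > 0\<close>
      by (simp add: gam_def gam_step_def theta_def k divide_simps add.assoc del: mult_2)
        (simp add: algebra_simps)
  next
    case False
    then obtain i where k: "k = 2 * i + 1" using oddE by blast
    then have "Suc k = 2 * Suc i" by simp
    moreover have "Gamma (real (Suc i) + \<mu> + 1/2) = Gamma (real i + \<mu> + 3/2)"
      by (simp add: algebra_simps)
    ultimately show ?thesis using \<open>Gamma (\<mu> + 1/2) > 0\<close> k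
      by (simp add: gam_def gam_step_def theta_def divide_simps del: mult_2)
  qed
qed

lemma fact_le_gam:
  assumes "\<mu> \<ge> 0"
  shows "fact k \<le> gam \<mu> k"
proof (induction k)
  case 0
  then show ?case by (simp add: gam_0[OF assms])
next
  case (Suc k)
  have "fact (Suc k) = real (Suc k) * fact k" by simp
  also have "\<dots> \<le> gam_step \<mu> (Suc k) * gam \<mu> k"
    using Suc.IH gam_step_ge[OF assms, of "Suc k"] by (intro mult_mono) auto
  finally show ?case by (simp add: gam_Suc[OF assms])
qed

lemma gam_pos: "\<mu> \<ge> 0 \<Longrightarrow> gam \<mu> k > 0"
  using fact_le_gam[of \<mu> k] fact_gt_zero[where 'a = real] by (meson less_le_trans)

lemma gam_zero_eq_fact: "gam 0 k = fact k"
  by (induction k) (simp_all add: gam_0 gam_Suc gam_step_def theta_def)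

definition emu_term :: "real \<Rightarrow> real \<Rightarrow> nat \<Rightarrow> real" where
  "emu_term \<mu> y k = y ^ k / gam \<mu> k"

lemma emu_term_nonneg: "\<mu> \<ge> 0 \<Longrightarrow> y \<ge> 0 \<Longrightarrow> emu_term \<mu> y k \<ge> 0"
  using gam_pos[of \<mu> k] by (simp add: emu_term_def)

lemma emu_term_uminus: "emu_term \<mu> (- y) k = (if even k then 1 else -1) * emu_term \<mu> y k"
  by (simp add: emu_term_def power_minus')

lemma emu_term_Suc:
  assumes "\<mu> \<ge> 0"
  shows "emu_term \<mu> y (Suc k) * gam_step \<mu> (Suc k) = y * emu_term \<mu> y k"
  using gam_pos[OF assms, of k] gam_step_ge[OF assms, of "Suc k"]
  by (simp add: emu_term_def gam_Suc[OF assms])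

lemma summable_abs_emu_term:
  assumes "\<mu> \<ge> 0"
  shows "summable (\<lambda>k. \<bar>emu_term \<mu> y k\<bar>)"
proof (rule summable_comparison_test')
  show "summable (\<lambda>k. \<bar>y\<bar> ^ k / fact k)"
    using exp_converges[of "\<bar>y\<bar>"] by (simp add: sums_iff divide_inverse mult.commute)
  show "norm \<bar>emu_term \<mu> y k\<bar> \<le> \<bar>y\<bar> ^ k / fact k" for k
    using fact_le_gam[OF assms, of k] gam_pos[OF assms, of k]
    by (simp add: emu_term_def power_abs frac_le)
qed

lemma emu_term_sums: "\<mu> \<ge> 0 \<Longrightarrow> emu_term \<mu> y sums emu \<mu> y"
  using summable_rabs_cancel[OF summable_abs_emu_term]
  by (simp add: emu_def emu_term_def[abs_def] summable_sums)

lemma emu_zero_eq_exp: "emu 0 y = exp y"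
proof -
  have "emu_term 0 y sums exp y"
    using exp_converges[of y]
    by (simp add: emu_term_def[abs_def] gam_zero_eq_fact divide_inverse mult.commute)
  then show ?thesis using emu_term_sums[of 0 y] by (simp add: sums_unique2)
qed

lemma emu_pos: "\<mu> \<ge> 0 \<Longrightarrow> y \<ge> 0 \<Longrightarrow> emu \<mu> y > 0"
  using emu_term_sums[of \<mu> y] emu_term_nonneg[of \<mu> y]
  by (metis gam_0 emu_term_def div_by_1 power_0 sums_iff suminf_pos2 zero_less_one)

lemma emu_term_gam_step_sums:
  assumes "\<mu> \<ge> 0"
  shows "(\<lambda>k. emu_term \<mu> y k * gam_step \<mu> k) sums (y * emu \<mu> y)"
proof -
  have shifted: "(\<lambda>k. emu_term \<mu> y (Suc k) * gam_step \<mu> (Suc k)) sums (y * emu \<mu> y)"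
    unfolding emu_term_Suc[OF assms] by (intro sums_mult emu_term_sums assms)
  show ?thesis by (rule sums_Suc_imp[OF _ shifted]) (simp add: gam_step_0)
qed

lemma emu_term_gam_step_sq_sums:
  assumes "\<mu> \<ge> 0"
  shows "(\<lambda>k. emu_term \<mu> y k * gam_step \<mu> k ^ 2) sums
    (y * (y * emu \<mu> y) + y * (emu \<mu> y + 2 * \<mu> * emu \<mu> (- y)))"
proof -
  have "emu_term \<mu> y (Suc k) * gam_step \<mu> (Suc k) ^ 2 =
    y * (emu_term \<mu> y k * gam_step \<mu> k) + y * (emu_term \<mu> y k + 2 * \<mu> * emu_term \<mu> (- y) k)" for k
  proof -
    have "emu_term \<mu> y (Suc k) * gam_step \<mu> (Suc k) ^ 2 = y * emu_term \<mu> y k * gam_step \<mu> (Suc k)"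
      using emu_term_Suc[OF assms, of y k] by (simp add: power2_eq_square)
    then show ?thesis by (simp add: gam_step_Suc emu_term_uminus algebra_simps)
  qed
  moreover have "(\<lambda>k. y * (emu_term \<mu> y k * gam_step \<mu> k)
      + y * (emu_term \<mu> y k + 2 * \<mu> * emu_term \<mu> (- y) k))
    sums (y * (y * emu \<mu> y) + y * (emu \<mu> y + 2 * \<mu> * emu \<mu> (- y)))"
    by (intro sums_add sums_mult emu_term_gam_step_sums emu_term_sums assms)
  ultimately have shifted: "(\<lambda>k. emu_term \<mu> y (Suc k) * gam_step \<mu> (Suc k) ^ 2) sums
      (y * (y * emu \<mu> y) + y * (emu \<mu> y + 2 * \<mu> * emu \<mu> (- y)))"
    by simp
  show ?thesis by (rule sums_Suc_imp[OF _ shifted]) (simp add: gam_step_0)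
qed

definition even_exp_term :: "real \<Rightarrow> nat \<Rightarrow> real" where
  "even_exp_term l i = (if even i then l ^ (i div 2) / fact (i div 2) else 0)"

lemma even_exp_term_nonneg: "l \<ge> 0 \<Longrightarrow> even_exp_term l i \<ge> 0"
  by (simp add: even_exp_term_def)

lemma even_exp_term_sums_from_halves:
  assumes "(\<lambda>j. l ^ j / fact j * F (2 * j)) sums s"
  shows "(\<lambda>i. even_exp_term l i * F i) sums s"
proof -
  have "strict_mono (\<lambda>j::nat. 2 * j)" by (rule strict_monoI) simp
  moreover have "even_exp_term l i * F i = 0" if "i \<notin> range (\<lambda>j. 2 * j)" for i
    using that by (auto simp: even_exp_term_def)
  moreover have "(\<lambda>j. even_exp_term l (2 * j) * F (2 * j)) sums s"
    using assms by (simp add: even_exp_term_def)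
  ultimately show ?thesis by (rule sums_mono_reindex[THEN iffD1])
qed

lemma even_exp_term_sums: "even_exp_term l sums exp l"
  using even_exp_term_sums_from_halves[of l "\<lambda>_. 1"] emu_term_sums[of 0 l]
  by (simp add: emu_term_def[abs_def] gam_zero_eq_fact emu_zero_eq_exp)

lemma even_exp_term_index_sums: "(\<lambda>i. even_exp_term l i * real i) sums (2 * (l * exp l))"
proof (rule even_exp_term_sums_from_halves)
  show "(\<lambda>j. l ^ j / fact j * real (2 * j)) sums (2 * (l * exp l))"
    using sums_mult[OF emu_term_gam_step_sums[of 0 l], of 2]
    by (simp add: emu_term_def gam_zero_eq_fact gam_step_def emu_zero_eq_exp mult_ac)
qed

lemma even_exp_term_index_sq_sums:
  "(\<lambda>i. even_exp_term l i * real i ^ 2) sums (4 * (l * (l * exp l) + l * exp l))"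
proof (rule even_exp_term_sums_from_halves)
  show "(\<lambda>j. l ^ j / fact j * real (2 * j) ^ 2) sums (4 * (l * (l * exp l) + l * exp l))"
    using sums_mult[OF emu_term_gam_step_sq_sums[of 0 l], of 4]
    by (simp add: emu_term_def gam_zero_eq_fact gam_step_def emu_zero_eq_exp power_mult_distrib mult_ac)
qed

subsection \<open>\<open>T\<^sub>n\<close> as a weighted mean and its moments\<close>

definition node :: "real \<Rightarrow> nat \<Rightarrow> nat \<Rightarrow> real" where
  "node \<mu> n k = gam_step \<mu> k / real n"

definition Top_weight :: "real \<Rightarrow> real \<Rightarrow> nat \<Rightarrow> real \<Rightarrow> nat \<Rightarrow> real" where
  "Top_weight \<alpha> \<mu> n x k = hpol \<mu> k (real n) \<alpha> / gam \<mu> k * x ^ k"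

lemma Top_eq_weighted_sum:
  "Top \<alpha> \<mu> n f x =
    (\<Sum>k. Top_weight \<alpha> \<mu> n x k * f (node \<mu> n k)) / (exp (\<alpha> * x\<^sup>2) * emu \<mu> (real n * x))"
  by (simp add: Top_def Top_weight_def node_def gam_step_def)

lemma node_nonneg: "\<mu> \<ge> 0 \<Longrightarrow> node \<mu> n k \<ge> 0"
  using gam_step_ge[of \<mu> k] by (simp add: node_def)

lemma node_split:
  assumes "even i" "i \<le> k"
  shows "node \<mu> n k = node \<mu> n (k - i) + real i / real n"
proof -
  have "theta (k - i) = theta k" using assms by (simp add: theta_def)
  then show ?thesis using assms by (simp add: node_def gam_step_def of_nat_diff add_divide_distrib diff_divide_distrib)
qed

lemma sum_atMost_even:
  "(\<Sum>i\<le>(k::nat). if even i then F i else (0::real)) = (\<Sum>j\<le>k div 2. F (2 * j))"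
proof (induction k)
  case 0
  then show ?case by simp
next
  case (Suc k)
  show ?case
  proof (cases "even (Suc k)")
    case True
    then have "Suc k div 2 = Suc (k div 2)" "2 * Suc (k div 2) = Suc k" by presburger+
    then show ?thesis using Suc True by simp
  next
    case False
    then have "Suc k div 2 = k div 2" by presburger
    then show ?thesis using Suc False by simp
  qed
qed

lemma hpol_div_gam_eq_Cauchy_product:
  assumes "\<mu> \<ge> 0"
  shows "hpol \<mu> k \<xi> \<alpha> / gam \<mu> k * x ^ k =
    (\<Sum>i\<le>k. even_exp_term (\<alpha> * x\<^sup>2) i * emu_term \<mu> (\<xi> * x) (k - i))"
proof -
  have "hpol \<mu> k \<xi> \<alpha> / gam \<mu> k * x ^ k =
      (\<Sum>j\<le>k div 2. \<alpha> ^ j * \<xi> ^ (k - 2*j) / (fact j * gam \<mu> (k - 2*j)) * x ^ k)"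
    using gam_pos[OF assms, of k] by (simp add: hpol_def atMost_atLeast0 sum_distrib_right)
  also have "\<dots> = (\<Sum>j\<le>k div 2. even_exp_term (\<alpha> * x\<^sup>2) (2*j) * emu_term \<mu> (\<xi> * x) (k - 2*j))"
  proof (rule sum.cong)
    fix j assume "j \<in> {..k div 2}"
    then have "k = 2 * j + (k - 2 * j)" by auto
    then have "x ^ k = (x\<^sup>2) ^ j * x ^ (k - 2*j)"
      by (metis power_add power_mult)
    then show "\<alpha> ^ j * \<xi> ^ (k - 2*j) / (fact j * gam \<mu> (k - 2*j)) * x ^ k =
        even_exp_term (\<alpha> * x\<^sup>2) (2*j) * emu_term \<mu> (\<xi> * x) (k - 2*j)"
      by (simp add: even_exp_term_def emu_term_def power_mult_distrib)
  qed simp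
  also have "\<dots> = (\<Sum>i\<le>k. if even i
      then even_exp_term (\<alpha> * x\<^sup>2) i * emu_term \<mu> (\<xi> * x) (k - i) else 0)"
    by (rule sum_atMost_even[symmetric])
  also have "\<dots> = (\<Sum>i\<le>k. even_exp_term (\<alpha> * x\<^sup>2) i * emu_term \<mu> (\<xi> * x) (k - i))"
    by (rule sum.cong) (auto simp: even_exp_term_def)
  finally show ?thesis .
qed

lemma Top_weight_mult_eq:
  assumes "\<mu> \<ge> 0"
  shows "Top_weight \<alpha> \<mu> n x k * F (node \<mu> n k) =
    (\<Sum>i\<le>k. even_exp_term (\<alpha> * x\<^sup>2) i * emu_term \<mu> (real n * x) (k - i)
      * F (node \<mu> n (k - i) + real i / real n))"
  unfolding Top_weight_def hpol_div_gam_eq_Cauchy_product[OF assms] sum_distrib_right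
  by (intro sum.cong) (auto simp: even_exp_term_def node_split)

lemma Top_weight_nonneg:
  "\<alpha> \<ge> 0 \<Longrightarrow> \<mu> \<ge> 0 \<Longrightarrow> x \<ge> 0 \<Longrightarrow> Top_weight \<alpha> \<mu> n x k \<ge> 0"
  using Top_weight_mult_eq[of \<mu> \<alpha> n x k "\<lambda>_. 1"]
  by (simp add: sum_nonneg even_exp_term_nonneg emu_term_nonneg)

lemma emu_term_node_sums:
  assumes "\<mu> \<ge> 0" "n > 0"
  shows "(\<lambda>k. emu_term \<mu> (real n * x) k * node \<mu> n k) sums (x * emu \<mu> (real n * x))"
  using sums_divide[OF emu_term_gam_step_sums[OF assms(1), of "real n * x"], of "real n"] assms(2)
  by (simp add: node_def)

lemma emu_term_node_sq_sums:
  assumes "\<mu> \<ge> 0" "n > 0"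
  shows "(\<lambda>k. emu_term \<mu> (real n * x) k * node \<mu> n k ^ 2) sums
    (x * (x * emu \<mu> (real n * x)) + x / real n * (emu \<mu> (real n * x) + 2 * \<mu> * emu \<mu> (- (real n * x))))"
proof -
  let ?y = "real n * x"
  have "(\<lambda>k. emu_term \<mu> ?y k * gam_step \<mu> k ^ 2 / real n ^ 2) sums
      ((?y * (?y * emu \<mu> ?y) + ?y * (emu \<mu> ?y + 2 * \<mu> * emu \<mu> (- ?y))) / real n ^ 2)"
    by (intro sums_divide emu_term_gam_step_sq_sums assms(1))
  moreover have "(?y * (?y * emu \<mu> ?y) + ?y * (emu \<mu> ?y + 2 * \<mu> * emu \<mu> (- ?y))) / real n ^ 2
      = x * (x * emu \<mu> ?y) + x / real n * (emu \<mu> ?y + 2 * \<mu> * emu \<mu> (- ?y))"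
    using assms(2) by (simp add: power2_eq_square field_simps)
  ultimately show ?thesis by (simp add: node_def power_divide)
qed

context
  fixes \<alpha> \<mu> x :: real and n :: nat
  assumes \<alpha>: "\<alpha> \<ge> 0" and \<mu>: "\<mu> \<ge> 0" and x: "x \<ge> 0" and n: "n > 0"
begin

private lemma factors_nonneg:
  "even_exp_term (\<alpha> * x\<^sup>2) i \<ge> 0" "emu_term \<mu> (real n * x) k \<ge> 0"
  using \<alpha> \<mu> x by (simp_all add: even_exp_term_nonneg emu_term_nonneg)

lemma Top_weight_sums: "Top_weight \<alpha> \<mu> n x sums (exp (\<alpha> * x\<^sup>2) * emu \<mu> (real n * x))"
proof -
  have "Top_weight \<alpha> \<mu> n x =
      (\<lambda>k. \<Sum>i\<le>k. even_exp_term (\<alpha> * x\<^sup>2) i * emu_term \<mu> (real n * x) (k - i))"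
    using Top_weight_mult_eq[OF \<mu>, where F = "\<lambda>_. 1"] by (simp add: fun_eq_iff)
  then show ?thesis
    using factors_nonneg by (simp add: sums_Cauchy_product_nonneg even_exp_term_sums emu_term_sums \<mu>)
qed

lemma Top_weight_node_sums:
  "(\<lambda>k. Top_weight \<alpha> \<mu> n x k * node \<mu> n k) sums
    (exp (\<alpha> * x\<^sup>2) * (x * emu \<mu> (real n * x))
      + 2 * (\<alpha> * x\<^sup>2 * exp (\<alpha> * x\<^sup>2)) / real n * emu \<mu> (real n * x))"
  (is "_ sums ?M1")
proof -
  let ?c = "even_exp_term (\<alpha> * x\<^sup>2)" and ?b = "emu_term \<mu> (real n * x)"
  have "Top_weight \<alpha> \<mu> n x k * node \<mu> n k =
      (\<Sum>i\<le>k. ?c i * (?b (k - i) * node \<mu> n (k - i))) + (\<Sum>i\<le>k. (?c i * (real i / real n)) * ?b (k - i))"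
    for k
    using Top_weight_mult_eq[OF \<mu>, where F = "\<lambda>t. t"]
    by (simp add: sum.distrib[symmetric] algebra_simps)
  moreover have "(\<lambda>k. (\<Sum>i\<le>k. ?c i * (?b (k - i) * node \<mu> n (k - i)))
      + (\<Sum>i\<le>k. (?c i * (real i / real n)) * ?b (k - i))) sums ?M1"
    using factors_nonneg node_nonneg[OF \<mu>] sums_divide[OF even_exp_term_index_sums, of _ "real n"]
    by (intro sums_add sums_Cauchy_product_nonneg even_exp_term_sums emu_term_node_sums
        emu_term_sums \<mu> n mult_nonneg_nonneg divide_nonneg_nonneg) auto
  ultimately show ?thesis by simp
qed

lemma Top_weight_node_sq_sums:
  "(\<lambda>k. Top_weight \<alpha> \<mu> n x k * node \<mu> n k ^ 2) sums
    (exp (\<alpha> * x\<^sup>2) * (x * (x * emu \<mu> (real n * x))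
        + x / real n * (emu \<mu> (real n * x) + 2 * \<mu> * emu \<mu> (- (real n * x))))
      + 2 * (2 * (\<alpha> * x\<^sup>2 * exp (\<alpha> * x\<^sup>2)) / real n * (x * emu \<mu> (real n * x)))
      + 4 * (\<alpha> * x\<^sup>2 * (\<alpha> * x\<^sup>2 * exp (\<alpha> * x\<^sup>2)) + \<alpha> * x\<^sup>2 * exp (\<alpha> * x\<^sup>2)) / real n ^ 2
        * emu \<mu> (real n * x))"
  (is "_ sums ?M2")
proof -
  let ?c = "even_exp_term (\<alpha> * x\<^sup>2)" and ?b = "emu_term \<mu> (real n * x)"
  have "Top_weight \<alpha> \<mu> n x k * node \<mu> n k ^ 2 =
      (\<Sum>i\<le>k. ?c i * (?b (k - i) * node \<mu> n (k - i) ^ 2))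
      + 2 * (\<Sum>i\<le>k. (?c i * (real i / real n)) * (?b (k - i) * node \<mu> n (k - i)))
      + (\<Sum>i\<le>k. (?c i * (real i / real n)\<^sup>2) * ?b (k - i))"
    for k
    using Top_weight_mult_eq[OF \<mu>, where F = "\<lambda>t. t ^ 2"]
    by (simp add: sum.distrib[symmetric] sum_distrib_left power2_eq_square algebra_simps)
  moreover have "(\<lambda>k. (\<Sum>i\<le>k. ?c i * (?b (k - i) * node \<mu> n (k - i) ^ 2))
      + 2 * (\<Sum>i\<le>k. (?c i * (real i / real n)) * (?b (k - i) * node \<mu> n (k - i)))
      + (\<Sum>i\<le>k. (?c i * (real i / real n)\<^sup>2) * ?b (k - i))) sums ?M2"
    using factors_nonneg node_nonneg[OF \<mu>] sums_divide[OF even_exp_term_index_sums, of _ "real n"]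
      sums_divide[OF even_exp_term_index_sq_sums, of _ "real n ^ 2"]
    by (intro sums_add sums_mult sums_Cauchy_product_nonneg even_exp_term_sums emu_term_node_sums
        emu_term_node_sq_sums emu_term_sums \<mu> n mult_nonneg_nonneg divide_nonneg_nonneg zero_le_power)
      (auto simp: power_divide)
  ultimately show ?thesis by simp
qed

lemma Top_weight_central_sums:
  "(\<lambda>k. Top_weight \<alpha> \<mu> n x k * (node \<mu> n k - x)\<^sup>2) sums
    (exp (\<alpha> * x\<^sup>2) * (x / real n * (emu \<mu> (real n * x) + 2 * \<mu> * emu \<mu> (- (real n * x)))
      + 4 * ((\<alpha> * x\<^sup>2)\<^sup>2 + \<alpha> * x\<^sup>2) / real n ^ 2 * emu \<mu> (real n * x)))"
proof -
  from sums_add[OF sums_diff[OF Top_weight_node_sq_sums sums_mult[OF Top_weight_node_sums, of "2 * x"]]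
      sums_mult[OF Top_weight_sums, of "x\<^sup>2"]]
  show ?thesis by (simp add: power2_eq_square algebra_simps)
qed

end

theorem theorem7:
  fixes \<alpha> \<mu> x :: real and n :: nat and g :: "real \<Rightarrow> real"
  assumes "\<alpha> \<ge> 0" "\<mu> \<ge> 0" "uniformly_continuous_on {0..} g" "n \<ge> 1" "x \<ge> 0"
  shows "\<bar>Top \<alpha> \<mu> n g x - g x\<bar> \<le>
    (1 + sqrt (1 / real n * x * (4 * x^3 * \<alpha>^2 + 4 * x * \<alpha> + real n)
               + 2 * \<mu> * x * (emu \<mu> (- real n * x) / emu \<mu> (real n * x))))
    * modcont g (1 / sqrt (real n))"
proof -
  have "n > 0" using assms(4) by simp
  define E where "E = exp (\<alpha> * x\<^sup>2) * emu \<mu> (real n * x)"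
  define V where "V = exp (\<alpha> * x\<^sup>2) * (x / real n * (emu \<mu> (real n * x) + 2 * \<mu> * emu \<mu> (- (real n * x)))
      + 4 * ((\<alpha> * x\<^sup>2)\<^sup>2 + \<alpha> * x\<^sup>2) / real n ^ 2 * emu \<mu> (real n * x))"
  have "emu \<mu> (real n * x) > 0" using assms by (simp add: emu_pos)
  then have "E > 0" by (simp add: E_def)
  have "Top_weight \<alpha> \<mu> n x sums E"
    unfolding E_def using assms(1,2,5) \<open>n > 0\<close> by (rule Top_weight_sums)
  moreover have "(\<lambda>k. Top_weight \<alpha> \<mu> n x k * (node \<mu> n k - x)\<^sup>2) sums V"
    unfolding V_def using assms(1,2,5) \<open>n > 0\<close> by (rule Top_weight_central_sums)
  ultimately have "\<bar>Top \<alpha> \<mu> n g x - g x\<bar>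
      \<le> (1 + sqrt (V / E) / (1 / sqrt (real n))) * modcont g (1 / sqrt (real n))"
    unfolding Top_eq_weighted_sum E_def[symmetric] using assms \<open>n > 0\<close> \<open>E > 0\<close>
    by (intro weighted_mean_deviation_le_modcont node_nonneg Top_weight_nonneg) auto
  also have "sqrt (V / E) / (1 / sqrt (real n)) = sqrt (real n * V / E)"
    using real_sqrt_mult[of "V / E" "real n"] by (simp add: mult.commute)
  also have "real n * V / E = 1 / real n * x * (4 * x^3 * \<alpha>^2 + 4 * x * \<alpha> + real n)
               + 2 * \<mu> * x * (emu \<mu> (- real n * x) / emu \<mu> (real n * x))"
    using \<open>n > 0\<close> \<open>emu \<mu> (real n * x) > 0\<close>
    by (simp add: E_def V_def field_simps power2_eq_square power3_eq_cube)
  finally show ?thesis .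
qed

end
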